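(* Let $d\ge 1$ and $2\le n_1\le n_2\le\cdots\le n_d$ be integers, and let $G=P_{n_1}\times P_{n_2}\times\cdots\times P_{n_d}$. Then $$\sigma_T(G)= 2\left(\left\lfloor\tfrac{n_1}{2}\right\rfloor+\left\lfloor\tfrac{n_2}{2}\right\rfloor+\cdots+\left\lfloor\tfrac{n_{d-1}}{2}\right\rfloor\right)+1.$$
   Context: $P_n$ is the path on $n$ vertices and $\times$ is the Cartesian product, so $G$ is the $d$-dimensional grid with vertex set $\{(x_1,\dots,x_d): x_i\in\{1,\dots,n_i\}\}$, two vertices adjacent iff they differ by $1$ in exactly one coordinate and agree in all others. For a spanning tree $T$ of a connected graph $G$, $d_T(u,v)$ is the distance between $u$ and $v$ in $T$, $\sigma_T(G,T):=\max_{uv\in E(G)} d_T(u,v)$, and $\sigma_T(G):=\min\{\sigma_T(G,T): T \text{ a spanning tree of } G\}$. An empty sum is $0$. *)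

theory Defs
  imports Main
begin

text \<open>Simple graphs: vertex set V, edge set E of two-element sets.\<close>

definition walk :: "'a set set \<Rightarrow> 'a list \<Rightarrow> bool" where
  "walk T xs \<longleftrightarrow> xs \<noteq> [] \<and> (\<forall>i < length xs - 1. {xs ! i, xs ! (i+1)} \<in> T)"

definition connected_on :: "'a set \<Rightarrow> 'a set set \<Rightarrow> bool" where
  "connected_on V T \<longleftrightarrow>
     (\<forall>u\<in>V. \<forall>v\<in>V. \<exists>xs. walk T xs \<and> hd xs = u \<and> last xs = v)"

definition acyclic_edges :: "'a set set \<Rightarrow> bool" where
  "acyclic_edges T \<longleftrightarrow>
     \<not> (\<exists>xs. length xs \<ge> 3 \<and> distinct xs \<and> walk T xs \<and> {last xs, hd xs} \<in> T)"

definition spanning_tree :: "'a set \<Rightarrow> 'a set set \<Rightarrow> 'a set set \<Rightarrow> bool" where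
  "spanning_tree V E T \<longleftrightarrow> T \<subseteq> E \<and> connected_on V T \<and> acyclic_edges T"

definition tdist :: "'a set set \<Rightarrow> 'a \<Rightarrow> 'a \<Rightarrow> nat" where
  "tdist T u v = (LEAST k. \<exists>xs. walk T xs \<and> hd xs = u \<and> last xs = v \<and> length xs = k + 1)"

definition tree_stretch :: "'a set set \<Rightarrow> 'a set set \<Rightarrow> nat" where
  "tree_stretch E T = Max {tdist T u v | u v. {u, v} \<in> E}"

definition sigmaT :: "'a set \<Rightarrow> 'a set set \<Rightarrow> nat" where
  "sigmaT V E = Min {tree_stretch E T | T. spanning_tree V E T}"

text \<open>The grid P_{n_1} x ... x P_{n_d}, with ns = [n_1,...,n_d]; vertices are lists.\<close>
definition grid_V :: "nat list \<Rightarrow> nat list set" where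
  "grid_V ns = {xs. length xs = length ns \<and> (\<forall>i < length ns. 1 \<le> xs ! i \<and> xs ! i \<le> ns ! i)}"

definition grid_E :: "nat list \<Rightarrow> nat list set set" where
  "grid_E ns = {{x, y} | x y. x \<in> grid_V ns \<and> y \<in> grid_V ns \<and>
     (\<exists>i < length ns. (x ! i = y ! i + 1 \<or> y ! i = x ! i + 1) \<and>
        (\<forall>j < length ns. j \<noteq> i \<longrightarrow> x ! j = y ! j))}"

end

theory Submission
  imports Defs
begin

text \<open>
  Write R for the sum of the halves n_i div 2 over the first d - 1 sides.

  Call the vertices whose first d - 1 coordinates are central the spine. Joining each
  vertex off the spine to the neighbour one step closer to the centre in its first off-centre
  coordinate, and each spine vertex to the spine vertex below it, gives a spanning tree (the comb).
  Every vertex reaches the spine in at most R steps, and the spine projections of the two ends of a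
  grid edge coincide or are adjacent, so each grid edge is stretched to at most 2R + 1.

  Map each vertex to its far corner, moving every coordinate to the farther end of its
  side. This map has no fixed point, so every spanning tree T has an edge ab such that after deleting
  ab the far corner of a lies on the side of b and vice versa. As a and b differ in one coordinate j
  only, the two far corners lie on a grid line in direction j, and some grid edge uv of this line
  crosses between the two sides. The T-path from u to v passes through ab. Off coordinate j, u and v
  agree with both far corners, so, the n_i being sorted, they are at l1-distance at least R from a
  and from b; hence this path has length at least 2R + 1.
\<close>

abbreviation walk_betw :: "'a set set \<Rightarrow> 'a \<Rightarrow> 'a list \<Rightarrow> 'a \<Rightarrow> bool" where
  "walk_betw T u ws v \<equiv> walk T ws \<and> hd ws = u \<and> last ws = v"

lemma walk_Nil [simp]: "\<not> walk S []"
  by (simp add: walk_def)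

lemma walk_single [simp]: "walk S [x]"
  by (simp add: walk_def)

lemma walk_Cons2 [simp]: "walk S (x # y # ys) \<longleftrightarrow> {x,y} \<in> S \<and> walk S (y # ys)"
  unfolding walk_def by (simp add: All_less_Suc2)

lemma walk_Cons: "walk S (x # xs) \<longleftrightarrow> xs = [] \<or> {x, hd xs} \<in> S \<and> walk S xs"
  by (cases xs) auto

lemma walk_append_iff:
  "xs \<noteq> [] \<Longrightarrow> ys \<noteq> [] \<Longrightarrow> walk S (xs @ ys) \<longleftrightarrow> walk S xs \<and> walk S ys \<and> {last xs, hd ys} \<in> S"
  by (induction xs rule: induct_list012) (auto simp: walk_Cons)

lemma walk_nth: "walk S xs \<Longrightarrow> Suc i < length xs \<Longrightarrow> {xs ! i, xs ! Suc i} \<in> S"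
  unfolding walk_def by auto

lemma walk_mono: "S \<subseteq> S' \<Longrightarrow> walk S xs \<Longrightarrow> walk S' xs"
  unfolding walk_def by blast

lemma walk_Diff_edge: "walk S xs \<Longrightarrow> c \<notin> set xs \<Longrightarrow> c \<in> e \<Longrightarrow> walk (S - {e}) xs"
  by (induction xs rule: induct_list012) auto

lemma walk_subset_vertices:
  "walk S xs \<Longrightarrow> S \<subseteq> Pow V \<Longrightarrow> hd xs \<in> V \<Longrightarrow> set xs \<subseteq> V"
  by (induction xs rule: induct_list012) auto

lemma walk_betw_snoc:
  "walk_betw S u xs v \<Longrightarrow> {v, w} \<in> S \<Longrightarrow> walk_betw S u (xs @ [w]) w"
  by (cases "xs = []") (auto simp: walk_append_iff)

lemma walk_betw_join:
  assumes "walk_betw S u xs v" "walk_betw S v ys w"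
  shows "walk_betw S u (xs @ tl ys) w"
proof -
  obtain ys' where ys: "ys = v # ys'" using assms(2) by (cases ys) auto
  have xs: "xs \<noteq> []" using assms(1) by auto
  show ?thesis
  proof (cases "ys' = []")
    case False
    then show ?thesis using assms xs ys by (auto simp: walk_append_iff walk_Cons)
  qed (use ys assms in simp)
qed

lemma walk_betw_rev: "walk_betw S u xs v \<Longrightarrow> walk_betw S v (rev xs) u"
proof (induction xs arbitrary: u rule: induct_list012)
  case (3 x y zs)
  then show ?case
    using walk_betw_snoc[where xs="rev (y # zs)" and v=y and w=x] by (auto simp: insert_commute)
qed auto

lemma walk_betw_prefix:
  assumes "walk_betw S u (p @ v # q) w"
  shows "walk_betw S u (p @ [v]) v"
proof (cases "q = []")
  case False
  then have "walk S (p @ [v])" using assms walk_append_iff[of "p @ [v]" q S] by auto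
  moreover have "hd (p @ [v]) = u" using assms by (cases p) auto
  ultimately show ?thesis by simp
qed (use assms in auto)

lemma walk_cyclic_nth:
  assumes "walk T xs" "{last xs, hd xs} \<in> T" "i < length xs"
  shows "{xs ! i, xs ! (Suc i mod length xs)} \<in> T"
proof (cases "Suc i = length xs")
  case True
  then have "xs \<noteq> []" "i = length xs - 1" by auto
  then have "last xs = xs ! i" "hd xs = xs ! 0"
    by (simp_all add: last_conv_nth hd_conv_nth)
  then show ?thesis using True assms(2) by (simp add: insert_commute)
next
  case False
  then show ?thesis using assms walk_nth by fastforce
qed

lemma walk_betw_distinct:
  "walk_betw S u xs v \<Longrightarrow> \<exists>ys. walk_betw S u ys v \<and> distinct ys"
proof (induction "length xs" arbitrary: xs rule: less_induct)
  case less
  show ?case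
  proof (cases "distinct xs")
    case False
    then obtain as z bs cs where xs: "xs = as @ [z] @ bs @ [z] @ cs"
      using not_distinct_decomp by blast
    have "walk_betw S (hd xs) (as @ [z]) z" "walk_betw S z (z # cs) (last xs)"
      using less.prems walk_append_iff[of "as @ [z]" "bs @ [z] @ cs" S]
        walk_append_iff[of "as @ [z] @ bs" "z # cs" S] xs
      by (auto simp: hd_append)
    then have "walk_betw S u (as @ z # cs) v"
      using walk_betw_join less.prems by fastforce
    then show ?thesis
      using less.hyps[of "as @ z # cs"] xs by auto
  qed (use less.prems in blast)
qed

lemma change_point_nat:
  fixes s t :: nat
  assumes "P s \<noteq> P t"
  shows "\<exists>k. min s t \<le> k \<and> k < max s t \<and> P k \<noteq> P (Suc k)"
proof -
  have "\<exists>k\<ge>s. k < t \<and> P k \<noteq> P (Suc k)" if "s \<le> t" "P s \<noteq> P t" for s t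
    using that
  proof (induction t rule: dec_induct)
    case (step n)
    then show ?case by (cases "P n = P (Suc n)") (auto intro: less_SucI)
  qed simp
  from this[of s t] this[of t s] assms show ?thesis
    by (cases "s \<le> t") (auto simp: min_def max_def)
qed

section \<open>Branches of a tree\<close>

definition branch :: "'a set set \<Rightarrow> 'a \<Rightarrow> 'a \<Rightarrow> 'a set" where
  "branch T c y = {x. \<exists>ws. walk_betw (T - {{c,y}}) y ws x}"

lemma branch_self: "y \<in> branch T c y"
  unfolding branch_def by (auto intro!: exI[of _ "[y]"])

lemma branch_step:
  assumes "x \<in> branch T c y" "{x,z} \<in> T - {{c,y}}"
  shows "z \<in> branch T c y"
proof -
  obtain ws where "walk_betw (T - {{c,y}}) y ws x"
    using assms(1) unfolding branch_def by blast
  then have "walk_betw (T - {{c,y}}) y (ws @ [z]) z"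
    using walk_betw_snoc assms(2) by metis
  then show ?thesis unfolding branch_def by blast
qed

lemma walk_set_subset_branch:
  assumes "walk_betw (T - {{c,y}}) y ws x"
  shows "set ws \<subseteq> branch T c y"
proof
  fix v assume "v \<in> set ws"
  then obtain p q where "ws = p @ v # q" by (meson split_list)
  then have "walk_betw (T - {{c,y}}) y (p @ [v]) v"
    using walk_betw_prefix assms by metis
  then show "v \<in> branch T c y" unfolding branch_def by blast
qed

lemma branch_subset:
  assumes "T \<subseteq> Pow V" "y \<in> V"
  shows "branch T c y \<subseteq> V"
proof
  fix x assume "x \<in> branch T c y"
  then obtain ws where "walk_betw (T - {{c,y}}) y ws x" unfolding branch_def by blast
  moreover have "set ws \<subseteq> V"
    using walk_subset_vertices[of "T - {{c,y}}" ws V] assms calculation by auto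
  ultimately show "x \<in> V" by (metis last_in_set walk_Nil subsetD)
qed

lemma branch_containing:
  assumes "walk_betw T c ws x" "x \<noteq> c"
  shows "\<exists>y. {c,y} \<in> T \<and> y \<noteq> c \<and> x \<in> branch T c y"
proof -
  have "c \<in> set ws" using assms(1) by (metis hd_in_set walk_Nil)
  then obtain p q where ws: "ws = p @ c # q" and "c \<notin> set q"
    using split_list_last by metis
  moreover have "q \<noteq> []" using assms ws by auto
  ultimately have "{c, hd q} \<in> T" "walk (T - {{c, hd q}}) q" "hd q \<noteq> c" "last q = x"
    using assms walk_append_iff[of p "c # q" T] walk_Diff_edge[of T q c]
    by (cases p; auto simp: walk_Cons)+
  then show ?thesis unfolding branch_def by blast
qed

lemma acyclic_edges_no_bypass:
  assumes "acyclic_edges T" "{a,b} \<in> T" "a \<noteq> b" "walk_betw (T - {{a,b}}) a ws b"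
  shows False
proof -
  obtain ys where ys: "walk_betw (T - {{a,b}}) a ys b" "distinct ys"
    using walk_betw_distinct[OF assms(4)] by blast
  then obtain y zs where "ys = a # y # zs"
    using assms(3) by (cases ys rule: remdups_adj.cases) auto
  with ys have "zs \<noteq> []" by auto
  with \<open>ys = a # y # zs\<close> have "length ys \<ge> 3" by (cases zs) auto
  moreover have "walk T ys" using ys walk_mono[of "T - {{a,b}}" T] by blast
  ultimately show False
    using assms(1,2) ys unfolding acyclic_edges_def by (auto simp: insert_commute)
qed

lemma not_in_own_branch:
  "acyclic_edges T \<Longrightarrow> {c,y} \<in> T \<Longrightarrow> c \<noteq> y \<Longrightarrow> c \<notin> branch T c y"
  unfolding branch_def using acyclic_edges_no_bypass[of T y c] by (auto simp: insert_commute)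

lemma branch_disjoint:
  assumes "acyclic_edges T" "{a,b} \<in> T" "a \<noteq> b"
  shows "branch T a b \<inter> branch T b a = {}"
proof (rule ccontr)
  assume "branch T a b \<inter> branch T b a \<noteq> {}"
  then obtain x xs ys where xs: "walk_betw (T - {{a,b}}) b xs x"
    and ys: "walk_betw (T - {{a,b}}) a ys x"
    unfolding branch_def by (auto simp: insert_commute)
  have "walk_betw (T - {{a,b}}) a (ys @ tl (rev xs)) b"
    using walk_betw_join[OF ys walk_betw_rev[OF xs]] .
  then show False using acyclic_edges_no_bypass assms by metis
qed

lemma branch_psubset:
  assumes ac: "acyclic_edges T" and ab: "{a,b} \<in> T" "a \<noteq> b"
    and bz: "{b,z} \<in> T" "b \<noteq> z" and "z \<noteq> a"
  shows "branch T b z \<subset> branch T a b"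
proof
  have "{b,z} \<noteq> {a,b}" using \<open>z \<noteq> a\<close> ab by (auto simp: doubleton_eq_iff)
  show "branch T b z \<subseteq> branch T a b"
  proof
    fix x assume "x \<in> branch T b z"
    then obtain ws where ws: "walk_betw (T - {{b,z}}) z ws x" unfolding branch_def by blast
    have "b \<notin> set ws"
      using walk_set_subset_branch[OF ws] not_in_own_branch[OF ac bz] by blast
    then have "walk (T - {{b,z}} - {{a,b}}) ws"
      using walk_Diff_edge[of "T - {{b,z}}" ws b "{a,b}"] ws by simp
    then have "walk (T - {{a,b}}) ws"
      by (rule walk_mono[rotated]) blast
    then have "walk_betw (T - {{a,b}}) b (b # ws) x"
      using ws bz \<open>{b,z} \<noteq> {a,b}\<close> by (auto simp: walk_Cons)
    then show "x \<in> branch T a b" unfolding branch_def by blast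
  qed
  show "branch T b z \<noteq> branch T a b"
    using branch_self[of b T a] not_in_own_branch[OF ac bz] by blast
qed

lemma walk_leaving_branch:
  assumes "walk T ws" "hd ws \<in> branch T a b" "last ws \<notin> branch T a b"
  shows "\<exists>i. Suc i < length ws \<and> {ws ! i, ws ! Suc i} = {a,b}"
proof -
  have ne: "ws \<noteq> []" using assms(1) by auto
  then obtain i where i: "i < length ws - 1"
    and change: "(ws ! i \<in> branch T a b) \<noteq> (ws ! Suc i \<in> branch T a b)"
    using assms change_point_nat[of "\<lambda>i. ws ! i \<in> branch T a b" 0 "length ws - 1"]
    by (auto simp: hd_conv_nth last_conv_nth)
  have "{ws ! i, ws ! Suc i} \<in> T" using walk_nth assms(1) i by fastforce
  then have "{ws ! i, ws ! Suc i} = {a,b}"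
    using change branch_step[of "ws ! i" T a b "ws ! Suc i"]
      branch_step[of "ws ! Suc i" T a b "ws ! i"]
    by (auto simp: insert_commute)
  then show ?thesis using i by (intro exI[of _ i]) auto
qed

text \<open>Choose c and a neighbour y with f c in the branch at c through y such that this branch is
  as small as possible; the branch at y containing f y must then be the one through c, since any
  other branch at y would be strictly smaller.\<close>

lemma tree_edge_swapped:
  assumes fin: "finite V" and TV: "T \<subseteq> Pow V"
    and conn: "connected_on V T" and ac: "acyclic_edges T"
    and f: "f ` V \<subseteq> V" "\<forall>c\<in>V. f c \<noteq> c" and "V \<noteq> {}"
  shows "\<exists>a b. {a,b} \<in> T \<and> a \<noteq> b \<and> f a \<in> branch T a b \<and> f b \<in> branch T b a"
proof -
  define M where "M = {(c,y). c \<in> V \<and> {c,y} \<in> T \<and> c \<noteq> y \<and> f c \<in> branch T c y}"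
  have ex: "\<exists>y. (c,y) \<in> M" if c: "c \<in> V" for c
  proof -
    have "f c \<in> V" "f c \<noteq> c" using f c by auto
    then obtain ws where "walk_betw T c ws (f c)"
      using conn c unfolding connected_on_def by blast
    then have "\<exists>y. {c,y} \<in> T \<and> y \<noteq> c \<and> f c \<in> branch T c y"
      using \<open>f c \<noteq> c\<close> by (rule branch_containing)
    then show ?thesis using c unfolding M_def by auto
  qed
  obtain p0 where "p0 \<in> M" using ex \<open>V \<noteq> {}\<close> by fast
  then obtain q where "q \<in> M"
    and least: "\<forall>q'\<in>M. card (branch T (fst q) (snd q)) \<le> card (branch T (fst q') (snd q'))"
    using ex_has_least_nat[of "\<lambda>q. q \<in> M" p0 "\<lambda>q. card (branch T (fst q) (snd q))"] by auto
  obtain a b where "q = (a,b)" by fastforce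
  with \<open>q \<in> M\<close> have ab: "{a,b} \<in> T" "a \<noteq> b" "f a \<in> branch T a b"
    unfolding M_def by auto
  then have "b \<in> V" using TV by blast
  then obtain z where bz: "{b,z} \<in> T" "b \<noteq> z" "f b \<in> branch T b z"
    using ex unfolding M_def by blast
  have "z = a"
  proof (rule ccontr)
    assume "z \<noteq> a"
    then have "branch T b z \<subset> branch T a b"
      using branch_psubset[OF ac ab(1,2) bz(1,2)] by blast
    moreover have "finite (branch T a b)"
      using branch_subset[OF TV \<open>b \<in> V\<close>] fin finite_subset by blast
    ultimately have "card (branch T b z) < card (branch T a b)"
      by (rule psubset_card_mono[rotated])
    moreover have "(b,z) \<in> M" using \<open>b \<in> V\<close> bz unfolding M_def by blast
    ultimately show False using least \<open>q = (a,b)\<close> by fastforce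
  qed
  then show ?thesis using ab bz by blast
qed

lemma tdist_le_length: "walk_betw T u ws v \<Longrightarrow> tdist T u v + 1 \<le> length ws"
  unfolding tdist_def by (cases ws) (auto intro!: Least_le)

lemma tdist_attained:
  assumes "walk_betw T u ws v"
  shows "\<exists>ws'. walk_betw T u ws' v \<and> length ws' = tdist T u v + 1"
proof -
  let ?P = "\<lambda>k. \<exists>ws'. walk_betw T u ws' v \<and> length ws' = k + 1"
  have "?P (length ws - 1)" using assms by (cases ws) auto
  then have "?P (LEAST k. ?P k)" by (rule LeastI)
  then show ?thesis unfolding tdist_def by simp
qed

lemma finite_edge_values:
  "finite V \<Longrightarrow> E \<subseteq> Pow V \<Longrightarrow> finite {g u v | u v. {u,v} \<in> E}"
  by (rule finite_subset[of _ "(\<lambda>(u,v). g u v) ` (V \<times> V)"]) auto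

lemma tdist_le_tree_stretch:
  "finite V \<Longrightarrow> E \<subseteq> Pow V \<Longrightarrow> {u,v} \<in> E \<Longrightarrow> tdist T u v \<le> tree_stretch E T"
  unfolding tree_stretch_def by (rule Max_ge[OF finite_edge_values]) auto

lemma tree_stretch_le:
  assumes "finite V" "E \<subseteq> Pow V" "\<exists>u v. {u,v} \<in> E"
    and "\<And>u v. {u,v} \<in> E \<Longrightarrow> tdist T u v \<le> k"
  shows "tree_stretch E T \<le> k"
  unfolding tree_stretch_def using assms
  by (intro Max.boundedI[OF finite_edge_values]) auto

lemma sigmaT_eqI:
  assumes "finite V" "E \<subseteq> Pow V" "spanning_tree V E T" "tree_stretch E T \<le> k"
    and "\<And>T'. spanning_tree V E T' \<Longrightarrow> k \<le> tree_stretch E T'"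
  shows "sigmaT V E = k"
proof -
  let ?S = "{tree_stretch E T' | T'. spanning_tree V E T'}"
  have "finite E" using finite_subset[OF assms(2)] assms(1) by simp
  have "?S \<subseteq> tree_stretch E ` Pow E"
    unfolding spanning_tree_def by blast
  then have fin: "finite ?S"
    by (rule finite_subset) (simp add: \<open>finite E\<close>)
  have T: "tree_stretch E T \<in> ?S" using assms(3) by blast
  have "Min ?S \<in> ?S" using Min_in[OF fin] T by blast
  then have "k \<le> Min ?S" using assms(5) by auto
  moreover have "Min ?S \<le> k" using Min_le[OF fin T] assms(4) by linarith
  ultimately show ?thesis unfolding sigmaT_def by simp
qed

section \<open>Spanning trees given by a parent map\<close>

lemma parent_edge_lower_end:
  assumes "{y,w} \<in> (\<lambda>x. {x, p x}) ` D" "\<And>x. x \<in> D \<Longrightarrow> h (p x) < (h x :: nat)" "h w \<le> h y"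
  shows "w = p y"
  using assms by (fastforce simp: doubleton_eq_iff)

text \<open>On a cycle, a vertex of maximal height has two distinct neighbours, and both would have
  to be its parent.\<close>

lemma acyclic_edges_parent:
  assumes "\<And>x. x \<in> D \<Longrightarrow> h (p x) < (h x :: nat)"
  shows "acyclic_edges ((\<lambda>x. {x, p x}) ` D)"
  unfolding acyclic_edges_def
proof
  let ?T = "(\<lambda>x. {x, p x}) ` D"
  assume "\<exists>xs. 3 \<le> length xs \<and> distinct xs \<and> walk ?T xs \<and> {last xs, hd xs} \<in> ?T"
  then obtain xs where xs: "3 \<le> length xs" "distinct xs" "walk ?T xs" "{last xs, hd xs} \<in> ?T"
    by blast
  define L where "L = length xs"
  let ?H = "(\<lambda>i. h (xs ! i)) ` {..<L}"
  have "finite ?H" "?H \<noteq> {}" using xs(1) unfolding L_def by force+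
  then have "Max ?H \<in> ?H" by (rule Max_in)
  then obtain k where k: "k < L" "h (xs ! k) = Max ?H" by auto
  have max: "\<forall>i<L. h (xs ! i) \<le> h (xs ! k)"
    using k(2) \<open>finite ?H\<close> by simp
  define k' where "k' = (if k = 0 then L - 1 else k - 1)"
  have "k' < L" "Suc k' mod L = k" "Suc k mod L < L" "Suc k mod L \<noteq> k'"
    using k(1) xs(1) unfolding k'_def L_def by (auto simp: mod_Suc)
  have "{xs ! k, xs ! k'} \<in> ?T" "{xs ! k, xs ! (Suc k mod L)} \<in> ?T"
    using walk_cyclic_nth[OF xs(3,4)] \<open>k' < L\<close> \<open>Suc k' mod L = k\<close> k(1)
    unfolding L_def by (metis insert_commute)+
  then have "xs ! k' = p (xs ! k)" "xs ! (Suc k mod L) = p (xs ! k)"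
    using parent_edge_lower_end[of "xs ! k" _ p D h] assms max \<open>k' < L\<close> \<open>Suc k mod L < L\<close>
    by blast+
  then show False
    using xs(2) \<open>k' < L\<close> \<open>Suc k mod L < L\<close> \<open>Suc k mod L \<noteq> k'\<close>
    unfolding L_def by (metis nth_eq_iff_index_eq)
qed

lemma walk_to_root:
  assumes "r \<in> V" "\<And>x. x \<in> V - {r} \<Longrightarrow> p x \<in> V \<and> h (p x) < (h x :: nat)" "x \<in> V"
  shows "\<exists>ws. walk_betw ((\<lambda>x. {x, p x}) ` (V - {r})) x ws r"
  using assms(3)
proof (induction "h x" arbitrary: x rule: less_induct)
  case less
  let ?T = "(\<lambda>x. {x, p x}) ` (V - {r})"
  show ?case
  proof (cases "x = r")
    case False
    then have x: "x \<in> V - {r}" using less.prems by blast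
    then obtain ws where ws: "walk_betw ?T (p x) ws r" using assms(2) less.hyps by blast
    have "{x, p x} \<in> ?T" using x by blast
    with ws have "walk_betw ?T x (x # ws) r" by (cases ws) auto
    then show ?thesis by blast
  qed (auto intro!: exI[of _ "[x]"])
qed

lemma spanning_tree_parent:
  assumes "r \<in> V" and "\<And>x. x \<in> V - {r} \<Longrightarrow> p x \<in> V \<and> {x, p x} \<in> E \<and> h (p x) < (h x :: nat)"
  shows "spanning_tree V E ((\<lambda>x. {x, p x}) ` (V - {r}))"
proof -
  let ?T = "(\<lambda>x. {x, p x}) ` (V - {r})"
  have "connected_on V ?T"
    unfolding connected_on_def
  proof (intro ballI)
    fix u v assume "u \<in> V" "v \<in> V"
    then obtain wu wv where "walk_betw ?T u wu r" "walk_betw ?T v wv r"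
      using walk_to_root[of r V p h] assms by meson
    then have "walk_betw ?T u (wu @ tl (rev wv)) v"
      using walk_betw_join walk_betw_rev by metis
    then show "\<exists>xs. walk_betw ?T u xs v" by blast
  qed
  moreover have "acyclic_edges ?T"
    using assms(2) by (intro acyclic_edges_parent[where h=h]) blast
  ultimately show ?thesis
    unfolding spanning_tree_def using assms(2) by blast
qed

lemma grid_E_iff:
  "{u,v} \<in> grid_E ns \<longleftrightarrow> u \<in> grid_V ns \<and> v \<in> grid_V ns \<and>
     (\<exists>i<length ns. (u!i = v!i+1 \<or> v!i = u!i+1) \<and> (\<forall>j<length ns. j\<noteq>i \<longrightarrow> u!j = v!j))"
  (is "?lhs \<longleftrightarrow> ?rhs")
proof
  assume ?lhs
  then obtain x y where "{u,v} = {x,y}" "x \<in> grid_V ns" "y \<in> grid_V ns"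
    "\<exists>i<length ns. (x!i = y!i+1 \<or> y!i = x!i+1) \<and> (\<forall>j<length ns. j\<noteq>i \<longrightarrow> x!j = y!j)"
    unfolding grid_E_def by blast
  then show ?rhs by (auto simp: doubleton_eq_iff)
qed (auto simp: grid_E_def)

lemma grid_V_length: "x \<in> grid_V ns \<Longrightarrow> length x = length ns"
  unfolding grid_V_def by simp

lemma grid_E_subset_Pow: "grid_E ns \<subseteq> Pow (grid_V ns)"
  unfolding grid_E_def by auto

lemma finite_grid_V: "finite (grid_V ns)"
proof (rule finite_subset)
  show "grid_V ns \<subseteq> {xs. set xs \<subseteq> {0..sum_list ns} \<and> length xs = length ns}"
    unfolding grid_V_def by (force simp: in_set_conv_nth intro: order.trans elem_le_sum_list)
qed (rule finite_lists_length_eq, simp)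

lemma grid_V_update:
  "x \<in> grid_V ns \<Longrightarrow> 1 \<le> t \<Longrightarrow> t \<le> ns ! i \<Longrightarrow> x[i := t] \<in> grid_V ns"
  unfolding grid_V_def by (cases "i < length x") (auto simp: nth_list_update)

lemma grid_E_update:
  assumes "x \<in> grid_V ns" "i < length ns" "1 \<le> t" "t \<le> ns ! i" "x ! i = t + 1 \<or> t = x ! i + 1"
  shows "{x, x[i := t]} \<in> grid_E ns"
  unfolding grid_E_iff using assms grid_V_update[OF assms(1,3,4)]
  by (intro conjI exI[of _ i]) (auto simp: grid_V_length)

definition absdiff :: "nat \<Rightarrow> nat \<Rightarrow> nat" where
  "absdiff a b = (a - b) + (b - a)"

definition l1_dist :: "nat \<Rightarrow> nat list \<Rightarrow> nat list \<Rightarrow> nat" where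
  "l1_dist n x y = (\<Sum>i<n. absdiff (x ! i) (y ! i))"

lemma l1_dist_triangle: "l1_dist n x z \<le> l1_dist n x y + l1_dist n y z"
  unfolding l1_dist_def absdiff_def sum.distrib[symmetric] by (rule sum_mono) arith

lemma l1_dist_commute: "l1_dist n x y = l1_dist n y x"
  unfolding l1_dist_def absdiff_def by (simp add: add.commute)

lemma l1_dist_grid_edge:
  assumes "{u,v} \<in> grid_E ns"
  shows "l1_dist (length ns) u v = 1"
proof -
  obtain i where i: "i < length ns" "u!i = v!i+1 \<or> v!i = u!i+1"
    "\<forall>j<length ns. j \<noteq> i \<longrightarrow> u!j = v!j"
    using assms unfolding grid_E_iff by blast
  have "l1_dist (length ns) u v =
      absdiff (u!i) (v!i) + (\<Sum>k\<in>{..<length ns} - {i}. absdiff (u!k) (v!k))"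
    unfolding l1_dist_def using i(1) by (simp add: sum.remove)
  also have "(\<Sum>k\<in>{..<length ns} - {i}. absdiff (u!k) (v!k)) = 0"
    using i(3) by (intro sum.neutral) (auto simp: absdiff_def)
  finally show ?thesis using i(2) unfolding absdiff_def by auto
qed

lemma l1_dist_walk:
  assumes "walk T ws" "T \<subseteq> grid_E ns" "i \<le> j" "j < length ws"
  shows "l1_dist (length ns) (ws ! i) (ws ! j) \<le> j - i"
  using assms(3,4)
proof (induction j rule: dec_induct)
  case (step j)
  have "{ws ! j, ws ! Suc j} \<in> grid_E ns" using walk_nth[OF assms(1)] step.prems assms(2) by blast
  then show ?case
    using step l1_dist_grid_edge l1_dist_triangle[of "length ns" "ws ! i" "ws ! Suc j" "ws ! j"]
    by fastforce
qed (simp add: l1_dist_def absdiff_def)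

lemma length_walk_via_edge:
  assumes ws: "walk_betw T u ws v" and T: "T \<subseteq> grid_E ns"
    and i: "Suc i < length ws" "{ws ! i, ws ! Suc i} = {a,b}"
    and far: "\<forall>w\<in>{a,b}. k \<le> l1_dist (length ns) u w \<and> k \<le> l1_dist (length ns) w v"
  shows "2 * k + 2 \<le> length ws"
proof -
  have "ws \<noteq> []" using i(1) by auto
  then have ends: "hd ws = ws ! 0" "last ws = ws ! (length ws - 1)"
    by (simp_all add: hd_conv_nth last_conv_nth)
  have "k \<le> l1_dist (length ns) (ws ! 0) (ws ! i)"
    using far i(2) ws ends by (auto simp: doubleton_eq_iff)
  also have "\<dots> \<le> i" using l1_dist_walk[of T ws ns 0 i] ws T i(1) by simp
  finally have "k \<le> i" .
  have "k \<le> l1_dist (length ns) (ws ! Suc i) (ws ! (length ws - 1))"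
    using far i(2) ws ends by (auto simp: doubleton_eq_iff)
  also have "\<dots> \<le> length ws - 1 - Suc i"
    using l1_dist_walk[of T ws ns "Suc i" "length ws - 1"] ws T i(1) by simp
  finally show ?thesis using \<open>k \<le> i\<close> i(1) by linarith
qed

lemma length_walk_leaving_branch:
  assumes ws: "walk_betw T u ws v" and T: "T \<subseteq> grid_E ns"
    and "u \<in> branch T a b" "v \<notin> branch T a b"
    and far: "\<forall>w\<in>{a,b}. k \<le> l1_dist (length ns) u w \<and> k \<le> l1_dist (length ns) w v"
  shows "2 * k + 2 \<le> length ws"
proof -
  have "walk T ws" "hd ws \<in> branch T a b" "last ws \<notin> branch T a b"
    using ws assms(3,4) by auto
  from walk_leaving_branch[OF this]
  obtain i where "Suc i < length ws" "{ws ! i, ws ! Suc i} = {a,b}" by blast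
  from length_walk_via_edge[OF ws T this far] show ?thesis .
qed

lemma grid_line_crossing:
  assumes x: "x \<in> grid_V ns" and j: "j < length ns"
    and "x[j := s] \<in> A" "x[j := t] \<notin> A" "1 \<le> s" "s \<le> ns ! j" "1 \<le> t" "t \<le> ns ! j"
  shows "\<exists>p q. {x[j := p], x[j := q]} \<in> grid_E ns \<and> x[j := p] \<in> A \<and> x[j := q] \<notin> A"
proof -
  obtain k where k: "min s t \<le> k" "k < max s t" and change: "(x[j := k] \<in> A) \<noteq> (x[j := Suc k] \<in> A)"
    using change_point_nat[of "\<lambda>k. x[j := k] \<in> A" s t] assms(3,4) by auto
  have "1 \<le> min s t" "max s t \<le> ns ! j" using assms(5-8) by simp_all
  then have "1 \<le> k" "Suc k \<le> ns ! j" using k by linarith+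
  have "x[j := k] \<in> grid_V ns" using grid_V_update[OF x \<open>1 \<le> k\<close>] \<open>Suc k \<le> ns ! j\<close> by simp
  moreover have "x[j := k] ! j = k" using j x by (simp add: grid_V_length)
  ultimately have "{x[j := k], (x[j := k])[j := Suc k]} \<in> grid_E ns"
    using \<open>Suc k \<le> ns ! j\<close> by (intro grid_E_update[OF _ j]) simp_all
  then have edge: "{x[j := k], x[j := Suc k]} \<in> grid_E ns" "{x[j := Suc k], x[j := k]} \<in> grid_E ns"
    by (simp_all add: insert_commute)
  show ?thesis
  proof (cases "x[j := k] \<in> A")
    case True
    then show ?thesis using edge(1) change by blast
  next
    case False
    then show ?thesis using edge(2) change by blast
  qed
qed

section \<open>The comb tree and the far corners\<close>

locale grid =
  fixes ns :: "nat list"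
  assumes ns_nonempty: "ns \<noteq> []" and ns_pos: "\<forall>i<length ns. 1 \<le> ns ! i"
begin

definition axis :: nat where
  "axis = length ns - 1"

definition radius :: nat where
  "radius = (\<Sum>i<axis. ns ! i div 2)"

definition centre :: "nat \<Rightarrow> nat" where
  "centre i = (ns ! i + 1) div 2"

definition spine_point :: "nat \<Rightarrow> nat list" where
  "spine_point t = map (\<lambda>i. if i < axis then centre i else t) [0..<length ns]"

definition spine_dist :: "nat list \<Rightarrow> nat" where
  "spine_dist x = (\<Sum>i<axis. absdiff (x ! i) (centre i))"

definition off_coord :: "nat list \<Rightarrow> nat" where
  "off_coord x = (LEAST i. i < axis \<and> x ! i \<noteq> centre i)"

definition towards :: "nat \<Rightarrow> nat \<Rightarrow> nat" where
  "towards c a = (if a < c then a + 1 else a - 1)"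

definition parent :: "nat list \<Rightarrow> nat list" where
  "parent x = (if spine_dist x = 0 then x[axis := x ! axis - 1]
               else x[off_coord x := towards (centre (off_coord x)) (x ! off_coord x)])"

definition comb_tree :: "nat list set set" where
  "comb_tree = (\<lambda>x. {x, parent x}) ` (grid_V ns - {spine_point 1})"

lemma length_eq_Suc_axis: "length ns = Suc axis"
  using ns_nonempty unfolding axis_def by simp

lemma axis_less: "axis < length ns"
  by (simp add: length_eq_Suc_axis)

lemma less_length_cases: "i < length ns \<Longrightarrow> i < axis \<or> i = axis"
  by (auto simp: length_eq_Suc_axis)

lemma centre_bounds: "i < length ns \<Longrightarrow> 1 \<le> centre i \<and> centre i \<le> ns ! i"
  using ns_pos unfolding centre_def by fastforce

lemma absdiff_centre_le:
  "i < length ns \<Longrightarrow> 1 \<le> t \<Longrightarrow> t \<le> ns ! i \<Longrightarrow> absdiff t (centre i) \<le> ns ! i div 2"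
  unfolding centre_def absdiff_def by auto

lemma spine_dist_le_radius: "x \<in> grid_V ns \<Longrightarrow> spine_dist x \<le> radius"
  unfolding spine_dist_def radius_def grid_V_def
  by (intro sum_mono absdiff_centre_le) (auto simp: length_eq_Suc_axis)

lemma spine_point_nth: "i < length ns \<Longrightarrow> spine_point t ! i = (if i < axis then centre i else t)"
  unfolding spine_point_def by simp

lemma spine_point_in_grid: "1 \<le> t \<Longrightarrow> t \<le> ns ! axis \<Longrightarrow> spine_point t \<in> grid_V ns"
  unfolding grid_V_def using centre_bounds less_length_cases
  by (auto simp: spine_point_nth spine_point_def)

lemma spine_dist_eq_0_iff:
  assumes "x \<in> grid_V ns"
  shows "spine_dist x = 0 \<longleftrightarrow> x = spine_point (x ! axis)"
proof -
  have "spine_dist x = 0 \<longleftrightarrow> (\<forall>i<axis. x ! i = centre i)"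
    unfolding spine_dist_def absdiff_def by (auto intro: order.antisym)
  also have "\<dots> \<longleftrightarrow> x = spine_point (x ! axis)"
  proof
    assume centred: "\<forall>i<axis. x ! i = centre i"
    show "x = spine_point (x ! axis)"
    proof (rule nth_equalityI)
      fix i assume "i < length x"
      then show "x ! i = spine_point (x ! axis) ! i"
        using centred assms less_length_cases[of i] by (auto simp: grid_V_length spine_point_nth)
    qed (use assms in \<open>simp add: grid_V_length spine_point_def\<close>)
  next
    assume x: "x = spine_point (x ! axis)"
    show "\<forall>i<axis. x ! i = centre i"
    proof (intro allI impI)
      fix i assume "i < axis"
      then show "x ! i = centre i"
        using spine_point_nth[of i "x ! axis"] x axis_less by simp
    qed
  qed
  finally show ?thesis .
qed

lemma spine_point_axis [simp]: "spine_point t ! axis = t"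
  using axis_less by (simp add: spine_point_nth)

lemma spine_dist_spine_point [simp]: "spine_dist (spine_point t) = 0"
  unfolding spine_dist_def absdiff_def using axis_less by (simp add: spine_point_nth)

lemma spine_point_update_axis: "(spine_point t)[axis := s] = spine_point s"
  by (rule nth_equalityI) (auto simp: spine_point_def nth_list_update dest: less_length_cases)

lemma parent_spine_point: "parent (spine_point (Suc t)) = spine_point t"
  unfolding parent_def by (simp add: spine_point_update_axis)

lemma spine_edge:
  assumes "1 \<le> t" "Suc t \<le> ns ! axis"
  shows "{spine_point t, spine_point (Suc t)} \<in> comb_tree"
proof -
  have "spine_point (Suc t) \<noteq> spine_point 1"
  proof
    assume "spine_point (Suc t) = spine_point 1"
    then have "spine_point (Suc t) ! axis = spine_point 1 ! axis" by simp
    then show False using assms(1) by simp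
  qed
  then have "spine_point (Suc t) \<in> grid_V ns - {spine_point 1}"
    using assms spine_point_in_grid[of "Suc t"] by simp
  then have "{spine_point (Suc t), spine_point t} \<in> comb_tree"
    unfolding comb_tree_def by (rule image_eqI[rotated]) (simp add: parent_spine_point)
  then show ?thesis by (simp add: insert_commute)
qed

lemma off_coord:
  assumes "spine_dist x \<noteq> 0"
  shows "off_coord x < axis" "x ! off_coord x \<noteq> centre (off_coord x)"
proof -
  obtain i where "i < axis" "x ! i \<noteq> centre i"
    using assms unfolding spine_dist_def absdiff_def by (auto intro: sum.neutral)
  then show "off_coord x < axis" "x ! off_coord x \<noteq> centre (off_coord x)"
    unfolding off_coord_def by (metis (mono_tags, lifting) LeastI)+
qed

lemma absdiff_towards: "a \<noteq> c \<Longrightarrow> absdiff (towards c a) c + 1 = absdiff a c"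
  unfolding towards_def absdiff_def by auto

lemma towards_bounds: "1 \<le> a \<Longrightarrow> a \<le> n \<Longrightarrow> 1 \<le> c \<Longrightarrow> c \<le> n \<Longrightarrow> a \<noteq> c \<Longrightarrow>
    1 \<le> towards c a \<and> towards c a \<le> n \<and> (a = towards c a + 1 \<or> towards c a = a + 1)"
  unfolding towards_def by auto

lemma parent_off_spine:
  assumes x: "x \<in> grid_V ns" and off: "spine_dist x \<noteq> 0"
  shows "parent x \<in> grid_V ns" "{x, parent x} \<in> grid_E ns"
    "spine_dist (parent x) + 1 = spine_dist x" "parent x ! axis = x ! axis"
proof -
  let ?i = "off_coord x"
  let ?t = "towards (centre ?i) (x ! ?i)"
  have i: "?i < axis" "x ! ?i \<noteq> centre ?i" using off_coord[OF off] by auto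
  then have "?i < length ns" using axis_less by linarith
  have p: "parent x = x[?i := ?t]" unfolding parent_def using off by simp
  have "length x = length ns" using x by (rule grid_V_length)
  have t: "1 \<le> ?t" "?t \<le> ns ! ?i" "x ! ?i = ?t + 1 \<or> ?t = x ! ?i + 1"
    using towards_bounds[OF _ _ _ _ i(2)] centre_bounds[OF \<open>?i < length ns\<close>] x \<open>?i < length ns\<close>
    unfolding grid_V_def by auto
  show "parent x \<in> grid_V ns" unfolding p using grid_V_update[OF x t(1,2)] .
  show "{x, parent x} \<in> grid_E ns" unfolding p using grid_E_update[OF x \<open>?i < length ns\<close> t] .
  show "parent x ! axis = x ! axis" unfolding p using i(1) by simp
  have "spine_dist x =
      absdiff (x ! ?i) (centre ?i) + (\<Sum>k\<in>{..<axis} - {?i}. absdiff (x ! k) (centre k))"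
    unfolding spine_dist_def using i(1) by (simp add: sum.remove)
  moreover have "spine_dist (parent x) =
      absdiff ?t (centre ?i) + (\<Sum>k\<in>{..<axis} - {?i}. absdiff (x ! k) (centre k))"
    unfolding spine_dist_def p using i(1) \<open>length x = length ns\<close> \<open>?i < length ns\<close>
    by (simp add: sum.remove)
  ultimately show "spine_dist (parent x) + 1 = spine_dist x"
    using absdiff_towards[OF i(2)] by simp
qed

lemma parent_step:
  assumes "x \<in> grid_V ns - {spine_point 1}"
  shows "parent x \<in> grid_V ns \<and> {x, parent x} \<in> grid_E ns \<and>
    spine_dist (parent x) + parent x ! axis < spine_dist x + x ! axis"
proof (cases "spine_dist x = 0")
  case True
  define t where "t = x ! axis"
  have "x = spine_point t" using True assms spine_dist_eq_0_iff unfolding t_def by blast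
  moreover have "1 \<le> t" "t \<le> ns ! axis" using assms axis_less unfolding t_def grid_V_def by auto
  moreover have "t \<noteq> 1" using assms \<open>x = spine_point t\<close> by blast
  moreover define s where "s = t - 1"
  ultimately have "x = spine_point (Suc s)" "1 \<le> s" "Suc s \<le> ns ! axis"
    by auto
  moreover note parent_spine_point[of s]
  moreover have "{spine_point (Suc s), spine_point s} \<in> grid_E ns"
    using grid_E_update[OF spine_point_in_grid[of "Suc s"] axis_less, of s] calculation
    by (simp add: spine_point_update_axis)
  ultimately show ?thesis using spine_point_in_grid[of s] by simp
next
  case False
  then show ?thesis using parent_off_spine assms by fastforce
qed

lemma comb_tree_spanning: "spanning_tree (grid_V ns) (grid_E ns) comb_tree"
  unfolding comb_tree_def
proof (rule spanning_tree_parent)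
  show "spine_point 1 \<in> grid_V ns" using ns_pos axis_less by (intro spine_point_in_grid) auto
qed (rule parent_step)

lemma walk_to_spine:
  assumes "x \<in> grid_V ns"
  shows "\<exists>ws. walk_betw comb_tree x ws (spine_point (x ! axis)) \<and> length ws = spine_dist x + 1"
  using assms
proof (induction "spine_dist x" arbitrary: x rule: less_induct)
  case less
  show ?case
  proof (cases "spine_dist x = 0")
    case True
    then have "x = spine_point (x ! axis)" using less.prems spine_dist_eq_0_iff by blast
    then show ?thesis using True by (intro exI[of _ "[x]"]) simp
  next
    case False
    note p = parent_off_spine[OF less.prems False]
    obtain ws where ws: "walk_betw comb_tree (parent x) ws (spine_point (x ! axis))"
      "length ws = spine_dist (parent x) + 1"
      using less.hyps[of "parent x"] p by auto
    have "x \<noteq> spine_point 1" using False by auto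
    then have "{x, parent x} \<in> comb_tree" unfolding comb_tree_def using less.prems by blast
    then have "walk_betw comb_tree x (x # ws) (spine_point (x ! axis))"
      using ws by (cases ws) auto
    then show ?thesis using ws(2) p(3) by (intro exI[of _ "x # ws"]) simp
  qed
qed

lemma walk_between_spine_points:
  assumes "{u,v} \<in> grid_E ns"
  shows "\<exists>ws. walk_betw comb_tree (spine_point (u ! axis)) ws (spine_point (v ! axis)) \<and>
    length ws \<le> 2"
proof -
  obtain i where i: "i < length ns" "u!i = v!i+1 \<or> v!i = u!i+1" "\<forall>j<length ns. j \<noteq> i \<longrightarrow> u!j = v!j"
    and "u \<in> grid_V ns" "v \<in> grid_V ns"
    using assms unfolding grid_E_iff by blast
  then have range: "1 \<le> u ! axis" "u ! axis \<le> ns ! axis" "1 \<le> v ! axis" "v ! axis \<le> ns ! axis"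
    using axis_less unfolding grid_V_def by auto
  consider "u ! axis = v ! axis" | "u ! axis = v ! axis + 1" | "v ! axis = u ! axis + 1"
    using i axis_less by (cases "i = axis") auto
  then show ?thesis
  proof cases
    case 1
    then show ?thesis by (intro exI[of _ "[spine_point (u ! axis)]"]) simp
  next
    case 2
    then have "{spine_point (u ! axis), spine_point (v ! axis)} \<in> comb_tree"
      using spine_edge[of "v ! axis"] range by (simp add: insert_commute)
    then show ?thesis by (intro exI[of _ "[spine_point (u ! axis), spine_point (v ! axis)]"]) simp
  next
    case 3
    then have "{spine_point (u ! axis), spine_point (v ! axis)} \<in> comb_tree"
      using spine_edge[of "u ! axis"] range by simp
    then show ?thesis by (intro exI[of _ "[spine_point (u ! axis), spine_point (v ! axis)]"]) simp
  qed
qed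

lemma tdist_comb_tree_le:
  assumes "{u,v} \<in> grid_E ns"
  shows "tdist comb_tree u v \<le> 2 * radius + 1"
proof -
  have "u \<in> grid_V ns" "v \<in> grid_V ns" using assms unfolding grid_E_iff by blast+
  then obtain wu wv where
    wu: "walk_betw comb_tree u wu (spine_point (u ! axis))" "length wu = spine_dist u + 1" and
    wv: "walk_betw comb_tree v wv (spine_point (v ! axis))" "length wv = spine_dist v + 1"
    using walk_to_spine by meson
  obtain mid where mid: "walk_betw comb_tree (spine_point (u ! axis)) mid (spine_point (v ! axis))"
    "length mid \<le> 2"
    using walk_between_spine_points[OF assms] by blast
  let ?ws = "(wu @ tl mid) @ tl (rev wv)"
  have "walk_betw comb_tree u ?ws v"
    using walk_betw_join[OF walk_betw_join[OF wu(1) mid(1)] walk_betw_rev[OF wv(1)]] .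
  then have "tdist comb_tree u v + 1 \<le> length ?ws" by (rule tdist_le_length)
  also have "\<dots> \<le> spine_dist u + spine_dist v + 2" using wu(2) wv(2) mid(2) by simp
  also have "\<dots> \<le> 2 * radius + 2"
    using spine_dist_le_radius[OF \<open>u \<in> grid_V ns\<close>] spine_dist_le_radius[OF \<open>v \<in> grid_V ns\<close>]
    by linarith
  finally show ?thesis by simp
qed

definition far_corner :: "nat list \<Rightarrow> nat list" where
  "far_corner c = map (\<lambda>i. if 2 * c ! i \<le> ns ! i + 1 then ns ! i else 1) [0..<length ns]"

lemma far_corner_nth:
  "i < length ns \<Longrightarrow> far_corner c ! i = (if 2 * c ! i \<le> ns ! i + 1 then ns ! i else 1)"
  unfolding far_corner_def by simp

lemma far_corner_in_grid: "far_corner c \<in> grid_V ns"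
  using ns_pos unfolding grid_V_def by (auto simp: far_corner_nth far_corner_def)

lemma absdiff_far_corner:
  assumes "c \<in> grid_V ns" "i < length ns"
  shows "ns ! i div 2 \<le> absdiff (far_corner c ! i) (c ! i)"
  using assms unfolding grid_V_def absdiff_def by (auto simp: far_corner_nth)

end

section \<open>The lower bound\<close>

lemma sum_butlast_le_sum_remove:
  fixes xs :: "'a::{linorder, ordered_comm_monoid_add} list"
  assumes "sorted xs" "j < length xs"
  shows "(\<Sum>i<length xs - 1. xs ! i) \<le> (\<Sum>i\<in>{..<length xs} - {j}. xs ! i)"
proof (cases "j = length xs - 1")
  case True
  then have "{..<length xs} - {j} = {..<length xs - 1}" using assms(2) by auto
  then show ?thesis by simp
next
  case False
  define m where "m = length xs - 1"
  have j: "j < m" "length xs = Suc m" using False assms(2) unfolding m_def by auto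
  have "(\<Sum>i<m. xs ! i) = xs ! j + (\<Sum>i\<in>{..<m} - {j}. xs ! i)"
    using j by (simp add: sum.remove)
  also have "\<dots> \<le> xs ! m + (\<Sum>i\<in>{..<m} - {j}. xs ! i)"
    using assms(1) j by (intro add_right_mono sorted_nth_mono) auto
  also have "\<dots> = (\<Sum>i\<in>{..<length xs} - {j}. xs ! i)"
  proof -
    have "{..<length xs} - {j} = insert m ({..<m} - {j})" using j by auto
    then show ?thesis by simp
  qed
  finally show ?thesis unfolding m_def .
qed

locale sorted_grid = grid +
  assumes ns_sorted: "sorted ns" and last_ge2: "2 \<le> last ns"
begin

lemma far_corner_ne:
  assumes "c \<in> grid_V ns"
  shows "far_corner c \<noteq> c"
proof
  assume "far_corner c = c"
  moreover have "1 \<le> ns ! axis div 2"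
    using last_ge2 ns_nonempty by (simp add: last_conv_nth axis_def)
  ultimately show False
    using absdiff_far_corner[OF assms axis_less] by (simp add: absdiff_def)
qed

lemma radius_le_l1_dist:
  assumes "j < length ns" "\<forall>i<length ns. i \<noteq> j \<longrightarrow> ns ! i div 2 \<le> absdiff (x ! i) (y ! i)"
  shows "radius \<le> l1_dist (length ns) x y"
proof -
  let ?h = "map (\<lambda>n. n div 2) ns"
  have "sorted ?h" using ns_sorted by (simp add: sorted_map div_le_mono sorted_iff_nth_mono)
  have "radius = (\<Sum>i<length ?h - 1. ?h ! i)"
    unfolding radius_def axis_def by simp
  also have "\<dots> \<le> (\<Sum>i\<in>{..<length ns} - {j}. ?h ! i)"
    using sum_butlast_le_sum_remove[OF \<open>sorted ?h\<close>, of j] assms(1) by simp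
  also have "\<dots> \<le> (\<Sum>i\<in>{..<length ns} - {j}. absdiff (x ! i) (y ! i))"
    using assms(2) by (intro sum_mono) auto
  also have "\<dots> \<le> l1_dist (length ns) x y"
    unfolding l1_dist_def by (intro sum_mono2) auto
  finally show ?thesis .
qed

lemma radius_le_l1_dist_far_corner:
  assumes "c \<in> grid_V ns" "j < length ns" "\<forall>i<length ns. i \<noteq> j \<longrightarrow> x ! i = far_corner c ! i"
  shows "radius \<le> l1_dist (length ns) x c"
  using assms absdiff_far_corner by (intro radius_le_l1_dist) auto

lemma far_grid_edge:
  assumes "spanning_tree (grid_V ns) (grid_E ns) T"
  shows "\<exists>u v. {u,v} \<in> grid_E ns \<and> (\<forall>ws. walk_betw T u ws v \<longrightarrow> 2 * radius + 2 \<le> length ws)"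
proof -
  have TE: "T \<subseteq> grid_E ns" and conn: "connected_on (grid_V ns) T" and ac: "acyclic_edges T"
    using assms unfolding spanning_tree_def by auto
  have "spine_point 1 \<in> grid_V ns" using ns_pos axis_less by (intro spine_point_in_grid) auto
  then obtain a b where ab: "{a,b} \<in> T" "a \<noteq> b"
    and swapped: "far_corner a \<in> branch T a b" "far_corner b \<in> branch T b a"
    using tree_edge_swapped[OF finite_grid_V order.trans[OF TE grid_E_subset_Pow] conn ac]
      far_corner_in_grid far_corner_ne by blast
  define A where "A = branch T b a"
  have "far_corner a \<notin> A" "far_corner b \<in> A"
    using branch_disjoint[OF ac ab] swapped unfolding A_def by auto
  have "{a,b} \<in> grid_E ns" using ab TE by blast
  then obtain j where j: "j < length ns" "\<forall>i<length ns. i \<noteq> j \<longrightarrow> a ! i = b ! i"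
    and "a \<in> grid_V ns" "b \<in> grid_V ns"
    unfolding grid_E_iff by blast
  let ?x = "far_corner a"
  have off_j: "\<forall>i<length ns. i \<noteq> j \<longrightarrow> ?x ! i = far_corner b ! i"
    using j(2) by (simp add: far_corner_nth)
  have "?x[j := far_corner b ! j] = far_corner b"
    using off_j j(1) by (intro nth_equalityI) (auto simp: nth_list_update far_corner_def)
  moreover have "1 \<le> far_corner c ! j" "far_corner c ! j \<le> ns ! j" for c
    using far_corner_in_grid[of c] j(1) unfolding grid_V_def by auto
  ultimately obtain p q
    where pq: "{?x[j := p], ?x[j := q]} \<in> grid_E ns" "?x[j := p] \<in> A" "?x[j := q] \<notin> A"
    using grid_line_crossing[OF far_corner_in_grid[of a] j(1),
        where s="far_corner b ! j" and t="?x ! j" and A=A]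
      \<open>far_corner a \<notin> A\<close> \<open>far_corner b \<in> A\<close> by auto
  have "\<forall>w\<in>{b,a}. radius \<le> l1_dist (length ns) (?x[j := p]) w \<and>
      radius \<le> l1_dist (length ns) w (?x[j := q])"
    using radius_le_l1_dist_far_corner[OF _ j(1)] \<open>a \<in> grid_V ns\<close> \<open>b \<in> grid_V ns\<close> off_j
    by (auto simp: l1_dist_commute[of _ _ "?x[j := q]"])
  then show ?thesis
    using length_walk_leaving_branch[OF _ TE] pq unfolding A_def by blast
qed

lemma tree_stretch_ge:
  assumes "spanning_tree (grid_V ns) (grid_E ns) T"
  shows "2 * radius + 1 \<le> tree_stretch (grid_E ns) T"
proof -
  obtain u v where e: "{u,v} \<in> grid_E ns"
    and long: "\<forall>ws. walk_betw T u ws v \<longrightarrow> 2 * radius + 2 \<le> length ws"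
    using far_grid_edge[OF assms] by blast
  have "u \<in> grid_V ns" "v \<in> grid_V ns" using e unfolding grid_E_iff by blast+
  moreover have "connected_on (grid_V ns) T" using assms unfolding spanning_tree_def by blast
  ultimately have "\<exists>ws. walk_betw T u ws v" unfolding connected_on_def by blast
  then obtain ws where "walk_betw T u ws v" by blast
  from tdist_attained[OF this]
  obtain ws' where "walk_betw T u ws' v" "length ws' = tdist T u v + 1" by blast
  then have "2 * radius + 1 \<le> tdist T u v" using long by fastforce
  also have "\<dots> \<le> tree_stretch (grid_E ns) T"
    using tdist_le_tree_stretch[OF finite_grid_V grid_E_subset_Pow e] .
  finally show ?thesis .
qed

lemma sigmaT_grid: "sigmaT (grid_V ns) (grid_E ns) = 2 * radius + 1"
proof (rule sigmaT_eqI[OF finite_grid_V grid_E_subset_Pow comb_tree_spanning])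
  have "Suc 1 \<le> ns ! axis" using last_ge2 ns_nonempty by (simp add: last_conv_nth axis_def)
  then have "{spine_point 1, spine_point (Suc 1)} \<in> comb_tree" by (intro spine_edge) simp_all
  then have edge: "{spine_point 1, spine_point (Suc 1)} \<in> grid_E ns"
    using comb_tree_spanning unfolding spanning_tree_def by blast
  show "tree_stretch (grid_E ns) comb_tree \<le> 2 * radius + 1"
    by (rule tree_stretch_le[OF finite_grid_V grid_E_subset_Pow])
      (use edge tdist_comb_tree_le in blast)+
qed (rule tree_stretch_ge)

end

theorem theorem4p2:
  fixes ns :: "nat list"
  assumes "length ns \<ge> 1"
    and "sorted ns"
    and "\<forall>i < length ns. ns ! i \<ge> 2"
  shows "sigmaT (grid_V ns) (grid_E ns) = 2 * (\<Sum>i < length ns - 1. ns ! i div 2) + 1"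
proof -
  have "ns \<noteq> []" using assms(1) by auto
  then interpret sorted_grid ns
    using assms by unfold_locales (auto simp: last_conv_nth)
  show ?thesis using sigmaT_grid unfolding radius_def axis_def .
qed

end
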